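(* Let $A \in \{0,1\}^{X\times Y}$ be a combinatorial channel and let $t \in \mathbb{R}^Y$ with $t \ge \mathbf{0}$ and $(At)_x > 0$ for all $x \in X$. Let $d \in \mathbb{R}$ and define $X_- = \{x \in X : (At)_x < d\}$ and $X_0 = \{x \in X : (At)_x = d\}$. Suppose \[ \mathbf{1}_{X_-}^T A t \ \le\ \mathbf{1}^T t \ \le\ (\mathbf{1}_{X_-} + \mathbf{1}_{X_0})^T A t. \] Define $z \in \mathbb{R}^Y$ by \[ z_y = t_y\left(\frac{1}{d} + \sum_{x \in N(y)} \max\left(\frac{1}{(At)_x} - \frac{1}{d},\ 0\right)\right). \] Then $z$ is feasible for $\kappa^*(A)$ (i.e. $z \ge \mathbf{0}$ and $Az \ge \mathbf{1}$), $p^*_{\textsc{dsu}}(A,t) = \mathbf{1}^T z$, and $\varphi_A(t) \le z$ entrywise. Consequently $\kappa^*_{\textsc{ldu}}(A,t) \le p^*_{\textsc{dsu}}(A,t)$.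
   Context: A combinatorial channel is a matrix $A \in \{0,1\}^{X\times Y}$ ($X,Y$ finite) in which every row and column contains a $1$. For $y \in Y$, $N(y) = \{x : A_{x,y}=1\}$. For $S \subseteq X$, $\mathbf{1}_S$ is its indicator vector. $\kappa^*(A) = \min\{\mathbf{1}^T z : z\ge \mathbf{0},\ Az \ge \mathbf{1}\}$. The degree sequence bound is $p^*_{\textsc{dsu}}(A,t) = \max\{\mathbf{1}^T w : w \in \mathbb{R}^X,\ \mathbf{0} \le w \le \mathbf{1},\ t^T A^T w \le t^T \mathbf{1}\}$. For $t$ with $At > \mathbf{0}$, $\varphi_A(t)_y = t_y / \min_{x \in N(y)} (At)_x$, and the local degree upper bound is $\kappa^*_{\textsc{ldu}}(A,t) = \mathbf{1}^T \varphi_A(t)$. *)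

theory Defs
  imports Complex_Main
begin

definition comb_channel :: "('x::finite \<Rightarrow> 'y::finite \<Rightarrow> real) \<Rightarrow> bool" where
  "comb_channel A \<longleftrightarrow> (\<forall>x y. A x y = 0 \<or> A x y = 1)
     \<and> (\<forall>x. \<exists>y. A x y = 1) \<and> (\<forall>y. \<exists>x. A x y = 1)"

definition mvec :: "('x::finite \<Rightarrow> 'y::finite \<Rightarrow> real) \<Rightarrow> ('y \<Rightarrow> real) \<Rightarrow> 'x \<Rightarrow> real" where
  "mvec A t x = (\<Sum>y\<in>UNIV. A x y * t y)"

definition tvec :: "('x::finite \<Rightarrow> 'y::finite \<Rightarrow> real) \<Rightarrow> ('x \<Rightarrow> real) \<Rightarrow> 'y \<Rightarrow> real" where
  "tvec A w y = (\<Sum>x\<in>UNIV. A x y * w x)"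

definition nbhd :: "('x \<Rightarrow> 'y \<Rightarrow> real) \<Rightarrow> 'y \<Rightarrow> 'x set" where
  "nbhd A y = {x. A x y = 1}"

definition kappa_feasible :: "('x::finite \<Rightarrow> 'y::finite \<Rightarrow> real) \<Rightarrow> ('y \<Rightarrow> real) \<Rightarrow> bool" where
  "kappa_feasible A z \<longleftrightarrow> (\<forall>y. z y \<ge> 0) \<and> (\<forall>x. mvec A z x \<ge> 1)"

definition p_dsu :: "('x::finite \<Rightarrow> 'y::finite \<Rightarrow> real) \<Rightarrow> ('y \<Rightarrow> real) \<Rightarrow> real" where
  "p_dsu A t = Sup {(\<Sum>x\<in>UNIV. w x) | w. (\<forall>x. 0 \<le> w x \<and> w x \<le> 1)
        \<and> (\<Sum>y\<in>UNIV. t y * tvec A w y) \<le> (\<Sum>y\<in>UNIV. t y)}"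

definition phi :: "('x::finite \<Rightarrow> 'y::finite \<Rightarrow> real) \<Rightarrow> ('y \<Rightarrow> real) \<Rightarrow> 'y \<Rightarrow> real" where
  "phi A t y = t y / Min (mvec A t ` nbhd A y)"

definition kappa_ldu :: "('x::finite \<Rightarrow> 'y::finite \<Rightarrow> real) \<Rightarrow> ('y \<Rightarrow> real) \<Rightarrow> real" where
  "kappa_ldu A t = (\<Sum>y\<in>UNIV. phi A t y)"

end

theory Submission
  imports Defs
begin

text \<open>With a = At and threshold d, the degree sequence bound is a fractional knapsack LP:
  maximise the number of rows subject to their total weight a x being at most 1^T t.
  The greedy optimum takes every row with a x < d and a fraction of the rows with a x = d.
  Weak duality, in the pointwise form w x \<le> w x a x / d + max (1 - a x / d) 0, shows that
  its value is 1^T t / d + \<Sum>x. max (1 - a x / d) 0, and z is built so that 1^T z has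
  exactly this value, since a x * max (1 / a x - 1 / d) 0 = max (1 - a x / d) 0.
  Moreover a x (1 / d + max (1 / a x - 1 / d) 0) = max 1 (a x / d) \<ge> 1 gives Az \<ge> 1, and
  the summand belonging to the row minimising a x over N(y) already dominates \<phi>(t)_y.\<close>

lemma knapsack_le_threshold_value:
  fixes a w :: "'x::finite \<Rightarrow> real"
  assumes "d > 0" and "\<forall>x. 0 \<le> w x \<and> w x \<le> 1" and "(\<Sum>x\<in>UNIV. w x * a x) \<le> T"
  shows "(\<Sum>x\<in>UNIV. w x) \<le> T / d + (\<Sum>x\<in>UNIV. max (1 - a x / d) 0)"
proof -
  have pointwise: "w x \<le> w x * a x / d + max (1 - a x / d) 0" for x
  proof -
    have "w x * (1 - a x / d) \<le> max (1 - a x / d) 0"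
      using assms(2) by (cases "1 - a x / d \<ge> 0")
        (auto simp: mult_left_le_one_le mult_nonneg_nonpos)
    moreover have "w x = w x * a x / d + w x * (1 - a x / d)"
      using \<open>d > 0\<close> by (simp add: field_simps)
    ultimately show ?thesis by linarith
  qed
  have "(\<Sum>x\<in>UNIV. w x) \<le> (\<Sum>x\<in>UNIV. w x * a x) / d + (\<Sum>x\<in>UNIV. max (1 - a x / d) 0)"
    using sum_mono[OF pointwise] by (simp add: sum.distrib sum_divide_distrib)
  also have "\<dots> \<le> T / d + (\<Sum>x\<in>UNIV. max (1 - a x / d) 0)"
    using assms(1,3) by (simp add: divide_right_mono)
  finally show ?thesis .
qed

lemma sum_max_one_minus_eq:
  fixes a :: "'x::finite \<Rightarrow> real"
  assumes "d > 0"
  shows "(\<Sum>x\<in>UNIV. max (1 - a x / d) 0) = real (card {x. a x < d}) - (\<Sum>x | a x < d. a x) / d"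
proof -
  have "(\<Sum>x\<in>UNIV. max (1 - a x / d) 0) = (\<Sum>x\<in>UNIV. if a x < d then 1 - a x / d else 0)"
    using assms by (intro sum.cong) (auto simp: max_def field_simps)
  also have "\<dots> = (\<Sum>x | a x < d. 1 - a x / d)"
    by (simp add: sum.If_cases)
  finally show ?thesis by (simp add: sum_subtractf sum_divide_distrib)
qed

lemma knapsack_threshold_value_attained:
  fixes a :: "'x::finite \<Rightarrow> real"
  assumes "d > 0"
    and low: "(\<Sum>x | a x < d. a x) \<le> T"
    and up: "T \<le> (\<Sum>x | a x \<le> d. a x)"
  obtains w where "\<forall>x. 0 \<le> w x \<and> w x \<le> 1" and "(\<Sum>x\<in>UNIV. w x * a x) = T"
    and "(\<Sum>x\<in>UNIV. w x) = T / d + (\<Sum>x\<in>UNIV. max (1 - a x / d) 0)"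
proof -
  define Xm where "Xm = {x. a x < d}"
  define X0 where "X0 = {x. a x = d}"
  define SM where "SM = (\<Sum>x\<in>Xm. a x)"
  define n0 where "n0 = real (card X0)"
  have disj: "Xm \<inter> X0 = {}" by (auto simp: Xm_def X0_def)
  have "{x. a x \<le> d} = Xm \<union> X0" by (auto simp: Xm_def X0_def)
  then have "T \<le> SM + n0 * d"
    using up disj by (simp add: sum.union_disjoint SM_def n0_def X0_def)
  moreover have "SM \<le> T" using low by (simp add: SM_def Xm_def)
  moreover define \<theta> where "\<theta> = (T - SM) / (d * n0)"
  ultimately have fill: "\<theta> * (n0 * d) = T - SM"
    using \<open>d > 0\<close> by (cases "n0 = 0") (auto simp: field_simps)
  have \<theta>: "0 \<le> \<theta> \<and> \<theta> \<le> 1"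
  proof (cases "n0 = 0")
    case False
    then have "d * n0 > 0" using \<open>d > 0\<close> by (simp add: n0_def card_gt_0_iff)
    then show ?thesis
      using \<open>SM \<le> T\<close> \<open>T \<le> SM + n0 * d\<close> by (simp add: \<theta>_def field_simps)
  qed (simp add: \<theta>_def)
  define w where "w x = (if x \<in> Xm then 1 else if x \<in> X0 then \<theta> else 0)" for x
  have wsum: "(\<Sum>x\<in>UNIV. w x * g x) = (\<Sum>x\<in>Xm. g x) + \<theta> * (\<Sum>x\<in>X0. g x)" for g
  proof -
    have "(\<Sum>x\<in>UNIV. w x * g x)
        = (\<Sum>x\<in>UNIV. (if x \<in> Xm then g x else 0) + \<theta> * (if x \<in> X0 then g x else 0))"
      using disj by (intro sum.cong) (auto simp: w_def)
    then show ?thesis by (simp add: sum.distrib sum_distrib_left[symmetric] sum.If_cases)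
  qed
  show thesis
  proof
    show "\<forall>x. 0 \<le> w x \<and> w x \<le> 1" using \<theta> by (simp add: w_def)
    have "(\<Sum>x\<in>X0. a x) = n0 * d" by (simp add: X0_def n0_def)
    then show "(\<Sum>x\<in>UNIV. w x * a x) = T"
      using fill by (simp only: wsum) (simp add: SM_def)
    have "(\<Sum>x\<in>UNIV. w x) = (\<Sum>x\<in>UNIV. w x * 1)" by simp
    also have "\<dots> = real (card Xm) + \<theta> * n0" by (simp only: wsum) (simp add: n0_def)
    also have "\<dots> = T / d + (real (card Xm) - SM / d)"
      using fill \<open>d > 0\<close> by (simp add: field_simps)
    also have "\<dots> = T / d + (\<Sum>x\<in>UNIV. max (1 - a x / d) 0)"
      using sum_max_one_minus_eq[OF \<open>d > 0\<close>, of a] by (simp add: SM_def Xm_def)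
    finally show "(\<Sum>x\<in>UNIV. w x) = T / d + (\<Sum>x\<in>UNIV. max (1 - a x / d) 0)" .
  qed
qed

lemma weighted_sum_tvec_eq:
  "(\<Sum>y\<in>UNIV. t y * tvec A w y) = (\<Sum>x\<in>UNIV. w x * mvec A t x)"
proof -
  have "(\<Sum>y\<in>UNIV. t y * tvec A w y) = (\<Sum>y\<in>UNIV. \<Sum>x\<in>UNIV. t y * (A x y * w x))"
    unfolding tvec_def by (simp add: sum_distrib_left)
  also have "\<dots> = (\<Sum>x\<in>UNIV. \<Sum>y\<in>UNIV. t y * (A x y * w x))" by (rule sum.swap)
  also have "\<dots> = (\<Sum>x\<in>UNIV. w x * mvec A t x)"
    unfolding mvec_def by (simp add: sum_distrib_left mult_ac)
  finally show ?thesis .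
qed

lemma p_dsu_eq_threshold_value:
  assumes "d > 0"
    and "(\<Sum>x | mvec A t x < d. mvec A t x) \<le> (\<Sum>y\<in>UNIV. t y)"
    and "(\<Sum>y\<in>UNIV. t y) \<le> (\<Sum>x | mvec A t x \<le> d. mvec A t x)"
  shows "p_dsu A t = (\<Sum>y\<in>UNIV. t y) / d + (\<Sum>x\<in>UNIV. max (1 - mvec A t x / d) 0)"
proof -
  obtain w where "\<forall>x. 0 \<le> w x \<and> w x \<le> 1" "(\<Sum>x\<in>UNIV. w x * mvec A t x) = (\<Sum>y\<in>UNIV. t y)"
    "(\<Sum>x\<in>UNIV. w x) = (\<Sum>y\<in>UNIV. t y) / d + (\<Sum>x\<in>UNIV. max (1 - mvec A t x / d) 0)"
    using knapsack_threshold_value_attained[OF assms] .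
  then show ?thesis
    unfolding p_dsu_def weighted_sum_tvec_eq
    using knapsack_le_threshold_value[OF \<open>d > 0\<close>]
    by (intro cSup_eq_maximum) (auto intro!: exI[of _ w])
qed

lemma mult_max_inverse_diff:
  fixes a d :: real
  assumes "a > 0" and "d > 0"
  shows "a * max (1 / a - 1 / d) 0 = max (1 - a / d) 0"
proof (cases "a \<le> d")
  case True
  then have "1 / d \<le> 1 / a" using assms by (simp add: frac_le)
  moreover have "a / d \<le> 1" using True assms by simp
  ultimately show ?thesis using assms by (simp add: right_diff_distrib)
next
  case False
  then have "1 / a \<le> 1 / d" using assms by (simp add: frac_le)
  moreover have "1 \<le> a / d" using False assms by simp
  ultimately show ?thesis by simp
qed

definition threshold_cover :: "('x::finite \<Rightarrow> 'y::finite \<Rightarrow> real) \<Rightarrow> ('y \<Rightarrow> real) \<Rightarrow> real \<Rightarrow> 'y \<Rightarrow> real" where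
  "threshold_cover A t d y = t y * (1 / d + (\<Sum>x\<in>nbhd A y. max (1 / mvec A t x - 1 / d) 0))"

lemma sum_nbhd_eq:
  assumes "comb_channel A"
  shows "(\<Sum>x\<in>nbhd A y. g x) = (\<Sum>x\<in>UNIV. A x y * g x)"
proof -
  have "(\<Sum>x\<in>UNIV. A x y * g x) = (\<Sum>x\<in>UNIV. if x \<in> nbhd A y then g x else 0)"
  proof (rule sum.cong[OF refl])
    fix x
    have "A x y = 0 \<or> A x y = 1" using assms by (simp add: comb_channel_def)
    then show "A x y * g x = (if x \<in> nbhd A y then g x else 0)" by (auto simp: nbhd_def)
  qed
  then show ?thesis by (simp add: sum.If_cases)
qed

lemma threshold_cover_ge_term:
  assumes "t y \<ge> 0" and "A x y = 1"
  shows "t y * (1 / d + max (1 / mvec A t x - 1 / d) 0) \<le> threshold_cover A t d y"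
proof -
  have "max (1 / mvec A t x - 1 / d) 0 \<le> (\<Sum>x\<in>nbhd A y. max (1 / mvec A t x - 1 / d) 0)"
    using assms(2) by (intro member_le_sum) (auto simp: nbhd_def)
  then show ?thesis using assms(1) by (simp add: threshold_cover_def mult_left_mono)
qed

lemma threshold_cover_feasible:
  assumes "comb_channel A" and "\<forall>y. t y \<ge> 0" and "\<forall>x. mvec A t x > 0" and "d > 0"
  shows "kappa_feasible A (threshold_cover A t d)"
  unfolding kappa_feasible_def
proof (intro conjI allI)
  fix y
  show "threshold_cover A t d y \<ge> 0"
    using assms(2,4) by (simp add: threshold_cover_def sum_nonneg)
next
  fix x
  define c where "c = 1 / d + max (1 / mvec A t x - 1 / d) 0"
  have "A x y * (t y * c) \<le> A x y * threshold_cover A t d y" for y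
  proof (cases "A x y = 1")
    case True
    then show ?thesis using threshold_cover_ge_term[where A = A and x = x and y = y] True assms(2) by (simp add: c_def)
  next
    case False
    then have "A x y = 0" using assms(1) by (meson comb_channel_def)
    then show ?thesis by simp
  qed
  then have "mvec A t x * c \<le> mvec A (threshold_cover A t d) x"
    unfolding mvec_def sum_distrib_right by (intro sum_mono) (simp add: mult_ac)
  moreover have "mvec A t x * c = mvec A t x / d + max (1 - mvec A t x / d) 0"
    using mult_max_inverse_diff[OF assms(3)[rule_format] assms(4)]
    by (simp add: c_def distrib_left)
  then have "1 \<le> mvec A t x * c" by linarith
  ultimately show "1 \<le> mvec A (threshold_cover A t d) x" by linarith
qed

lemma sum_threshold_cover:
  assumes "comb_channel A" and "\<forall>x. mvec A t x > 0" and "d > 0"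
  shows "(\<Sum>y\<in>UNIV. threshold_cover A t d y)
       = (\<Sum>y\<in>UNIV. t y) / d + (\<Sum>x\<in>UNIV. max (1 - mvec A t x / d) 0)"
proof -
  define f where "f x = max (1 / mvec A t x - 1 / d) 0" for x
  have "threshold_cover A t d y = t y / d + (\<Sum>x\<in>UNIV. A x y * (t y * f x))" for y
    unfolding threshold_cover_def f_def[symmetric] sum_nbhd_eq[OF assms(1)]
    by (simp add: distrib_left sum_distrib_left mult_ac)
  then have "(\<Sum>y\<in>UNIV. threshold_cover A t d y)
      = (\<Sum>y\<in>UNIV. t y) / d + (\<Sum>y\<in>UNIV. \<Sum>x\<in>UNIV. A x y * (t y * f x))"
    by (simp add: sum.distrib sum_divide_distrib)
  also have "\<dots> = (\<Sum>y\<in>UNIV. t y) / d + (\<Sum>x\<in>UNIV. \<Sum>y\<in>UNIV. A x y * (t y * f x))"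
    by (subst sum.swap) (rule refl)
  also have "\<dots> = (\<Sum>y\<in>UNIV. t y) / d + (\<Sum>x\<in>UNIV. mvec A t x * f x)"
    by (simp add: mvec_def sum_distrib_right mult.assoc)
  also have "\<dots> = (\<Sum>y\<in>UNIV. t y) / d + (\<Sum>x\<in>UNIV. max (1 - mvec A t x / d) 0)"
    using mult_max_inverse_diff[OF assms(2)[rule_format] assms(3)] by (simp add: f_def)
  finally show ?thesis .
qed

lemma phi_le_threshold_cover:
  assumes "comb_channel A" and "\<forall>y. t y \<ge> 0"
  shows "phi A t y \<le> threshold_cover A t d y"
proof -
  have "nbhd A y \<noteq> {}" using assms(1) by (auto simp: comb_channel_def nbhd_def)
  then have "Min (mvec A t ` nbhd A y) \<in> mvec A t ` nbhd A y" by (intro Min_in) auto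
  then obtain x where x: "A x y = 1" "Min (mvec A t ` nbhd A y) = mvec A t x"
    by (auto simp: nbhd_def)
  have "t y * (1 / mvec A t x) \<le> t y * (1 / d + max (1 / mvec A t x - 1 / d) 0)"
    using assms(2) by (intro mult_left_mono) auto
  then show ?thesis
    using threshold_cover_ge_term[where A = A and t = t and d = d and x = x and y = y] x(1) assms(2) x(2) by (simp add: phi_def)
qed

lemma threshold_pos:
  assumes "\<forall>y. t y \<ge> 0" and "\<forall>x. mvec A t x > 0"
    and "(\<Sum>y\<in>UNIV. t y) \<le> (\<Sum>x | mvec A t x \<le> d. mvec A t x)"
  shows "d > 0"
proof (rule ccontr)
  assume "\<not> d > 0"
  then have "d < mvec A t x" for x using assms(2)[rule_format, of x] by linarith
  then have "{x. mvec A t x \<le> d} = {}" by (simp add: not_le)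
  then have "(\<Sum>y\<in>UNIV. t y) \<le> 0" using assms(3) by simp
  moreover have "(\<Sum>y\<in>UNIV. t y) \<ge> 0" using assms(1) by (simp add: sum_nonneg)
  ultimately have "(\<Sum>y\<in>UNIV. t y) = 0" by linarith
  then have "\<forall>y\<in>UNIV. t y = 0" using assms(1) sum_nonneg_eq_0_iff[of UNIV t] by simp
  then show False using assms(2) by (simp add: mvec_def)
qed

theorem theorem4:
  fixes A :: "'x::finite \<Rightarrow> 'y::finite \<Rightarrow> real"
    and t :: "'y \<Rightarrow> real" and d :: real
    and Xm X0 :: "'x set" and z :: "'y \<Rightarrow> real"
  assumes chan: "comb_channel A"
    and tnn: "\<forall>y. t y \<ge> 0"
    and Atpos: "\<forall>x. mvec A t x > 0"
    and Xm_def: "Xm = {x. mvec A t x < d}"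
    and X0_def: "X0 = {x. mvec A t x = d}"
    and low: "(\<Sum>x\<in>Xm. mvec A t x) \<le> (\<Sum>y\<in>UNIV. t y)"
    and up: "(\<Sum>y\<in>UNIV. t y) \<le> (\<Sum>x\<in>Xm \<union> X0. mvec A t x)"
    and z_def: "\<forall>y. z y = t y * (1 / d + (\<Sum>x\<in>nbhd A y. max (1 / mvec A t x - 1 / d) 0))"
  shows "kappa_feasible A z \<and> p_dsu A t = (\<Sum>y\<in>UNIV. z y)
         \<and> (\<forall>y. phi A t y \<le> z y) \<and> kappa_ldu A t \<le> p_dsu A t"
proof -
  have z: "z = threshold_cover A t d" using z_def by (simp add: fun_eq_iff threshold_cover_def)
  have "Xm \<union> X0 = {x. mvec A t x \<le> d}" by (auto simp: Xm_def X0_def)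
  then have up': "(\<Sum>y\<in>UNIV. t y) \<le> (\<Sum>x | mvec A t x \<le> d. mvec A t x)" using up by simp
  have low': "(\<Sum>x | mvec A t x < d. mvec A t x) \<le> (\<Sum>y\<in>UNIV. t y)" using low Xm_def by simp
  have "d > 0" using threshold_pos[OF tnn Atpos up'] .
  have dsu_value: "p_dsu A t = (\<Sum>y\<in>UNIV. z y)"
    using p_dsu_eq_threshold_value[OF \<open>d > 0\<close> low' up'] sum_threshold_cover[OF chan Atpos \<open>d > 0\<close>]
    by (simp add: z)
  have dominates: "\<forall>y. phi A t y \<le> z y"
    using phi_le_threshold_cover[OF chan tnn] by (simp add: z)
  then have "kappa_ldu A t \<le> p_dsu A t"
    unfolding kappa_ldu_def dsu_value by (intro sum_mono) auto
  then show ?thesis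
    using threshold_cover_feasible[OF chan tnn Atpos \<open>d > 0\<close>] dsu_value dominates by (simp add: z)
qed

end
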